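(* For every $1\le i\le n$ and every $v\in V$, the following identity holds in $H_\zeta'(\mathfrak{sp}_{2n})$: \[ \sum_{j=1}^{2n}\sum_{e\in B}\left\{\frac{\partial\mathcal{Q}_i}{\partial e},v\right\}e(v_j)\,v_j^*=0. \]
   Context: Let $V=\mathbb{C}^{2n}$ with basis $v_1,\dots,v_{2n}$ and symplectic form $\omega(x,y)=x^TJy$, where $J$ is block diagonal with $n$ blocks $\begin{pmatrix}0&1\\-1&0\end{pmatrix}$; $\mathfrak{sp}_{2n}=\{A:A^TJ+JA=0\}$ acting on $V$. Let $v_1^*,\dots,v_{2n}^*$ be the basis with $\omega(v_i,v_j^* )=\delta_{ij}$. Identify $S(\mathfrak{sp}_{2n})$ with polynomial functions of $A\in\mathfrak{sp}_{2n}$ via the trace form. $B$ is a basis of $\mathfrak{sp}_{2n}$; for $F\in S(\mathfrak{sp}_{2n})$ written as a polynomial in the elements of $B$, $\partial F/\partial e$ ($e\in B$) denotes the partial derivative with respect to $e$. For $j\ge0$ let $\mathfrak{r}_j(x,y)\in S(\mathfrak{sp}_{2n})$ be the coefficient of $z^j$ in $\omega(x,(1-z^2A^2)^{-1}y)\det(1-zA)^{-1}$; for $\zeta_0,\zeta_2,\dots,\zeta_{2k}\in\mathbb{C}$, $H_\zeta'(\mathfrak{sp}_{2n})$ is the commutative algebra $S(\mathfrak{sp}_{2n})\otimes S(V)$ with the Poisson bracket determined by $\{a,b\}=[a,b]$ ($a,b\in\mathfrak{sp}_{2n}$), $\{g,v\}=g(v)$ ($g\in\mathfrak{sp}_{2n}$,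 $v\in V$), $\{x,y\}=\sum_j\zeta_{2j}\mathfrak{r}_{2j}(x,y)$ ($x,y\in V$). Define $\mathcal{Q}_i\in S(\mathfrak{sp}_{2n})$ by $\sum_{i=0}^n\mathcal{Q}_iz^{2i}=\det(1-zA)$. *)

theory Defs
  imports Complex_Main "Jordan_Normal_Form.Determinant"
    "HOL-Computational_Algebra.Polynomial_FPS"
begin

text \<open>V = C^(2n) as complex vectors of dimension 2n; matrices are JNF matrices.
  Indices are 0-based: v_j is unit_vec (2n) j for j < 2n.\<close>

definition mtrace :: "complex mat \<Rightarrow> complex" where
  "mtrace A = (\<Sum>k<dim_row A. A $$ (k, k))"

text \<open>J: block diagonal with n blocks [[0,1],[-1,0]].\<close>
definition Jmat :: "nat \<Rightarrow> complex mat" where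
  "Jmat n = mat (2*n) (2*n) (\<lambda>(r, s).
     if even r \<and> s = r + 1 then 1 else if odd r \<and> s + 1 = r then -1 else 0)"

definition omega :: "nat \<Rightarrow> complex vec \<Rightarrow> complex vec \<Rightarrow> complex" where
  "omega n x y = scalar_prod x (Jmat n *\<^sub>v y)"

definition sp :: "nat \<Rightarrow> complex mat set" where
  "sp n = {A. A \<in> carrier_mat (2*n) (2*n) \<and>
              transpose_mat A * Jmat n + Jmat n * A = 0\<^sub>m (2*n) (2*n)}"

definition vstar :: "nat \<Rightarrow> nat \<Rightarrow> complex vec" where
  "vstar n j = (SOME u. u \<in> carrier_vec (2*n) \<and>
       (\<forall>i<2*n. omega n (unit_vec (2*n) i) u = (if i = j then 1 else 0)))"

definition lincomb_mats :: "nat \<Rightarrow> complex mat list \<Rightarrow> (nat \<Rightarrow> complex) \<Rightarrow> complex mat" where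
  "lincomb_mats n B c = mat (2*n) (2*n) (\<lambda>rs. \<Sum>l<length B. c l * (B ! l) $$ rs)"

definition is_sp_basis :: "nat \<Rightarrow> complex mat list \<Rightarrow> bool" where
  "is_sp_basis n B \<longleftrightarrow> set B \<subseteq> sp n \<and>
     (\<forall>X\<in>sp n. \<exists>c. X = lincomb_mats n B c) \<and>
     (\<forall>c. lincomb_mats n B c = 0\<^sub>m (2*n) (2*n) \<longrightarrow> (\<forall>l<length B. c l = 0))"

text \<open>S(sp) (x) S(V) is realised as polynomial functions on sp x V^*; V^* is identified
  with V via omega.  An element is a function of (A, w) with A in sp, w in C^(2n).
  A basis element e of sp is the function A |-> tr(e A) (trace form); a vector x in V is the
  function w |-> omega(x, w).  Equality in H' means equality on sp x C^(2n).\<close>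

type_synonym Hfun = "complex mat \<Rightarrow> complex vec \<Rightarrow> complex"

definition genSp :: "complex mat \<Rightarrow> Hfun" where
  "genSp e = (\<lambda>A w. mtrace (e * A))"

definition genV :: "nat \<Rightarrow> complex vec \<Rightarrow> Hfun" where
  "genV n x = (\<lambda>A w. omega n x w)"

definition dualB :: "nat \<Rightarrow> complex mat list \<Rightarrow> nat \<Rightarrow> complex mat" where
  "dualB n B l = (SOME X. X \<in> sp n \<and>
      (\<forall>l'<length B. mtrace ((B ! l') * X) = (if l' = l then 1 else 0)))"

text \<open>Generators of H': the basis elements B!l of sp and the basis vectors v_k of V.\<close>
datatype gen = GS nat | GV nat

definition gens :: "nat \<Rightarrow> complex mat list \<Rightarrow> gen set" where
  "gens n B = GS ` {..<length B} \<union> GV ` {..<2*n}"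

text \<open>Partial derivative with respect to a generator (the generators being coordinates).\<close>
definition deriv0 :: "(complex \<Rightarrow> complex) \<Rightarrow> complex" where
  "deriv0 f = (SOME D. (f has_field_derivative D) (at 0))"

fun pd :: "nat \<Rightarrow> complex mat list \<Rightarrow> gen \<Rightarrow> Hfun \<Rightarrow> Hfun" where
  "pd n B (GS l) F = (\<lambda>A w. deriv0 (\<lambda>t. F (A + t \<cdot>\<^sub>m dualB n B l) w))"
| "pd n B (GV k) F = (\<lambda>A w. deriv0 (\<lambda>t. F A (w + t \<cdot>\<^sub>v vstar n k)))"

definition detpoly :: "nat \<Rightarrow> complex mat \<Rightarrow> complex poly" where
  "detpoly n A = det (1\<^sub>m (2*n) - map_mat (\<lambda>a. [:0, a:]) A)"

definition Qf :: "nat \<Rightarrow> nat \<Rightarrow> Hfun" where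
  "Qf n i = (\<lambda>A w. coeff (detpoly n A) (2*i))"

text \<open>r_j(x,y): coefficient of z^j in omega(x,(1-z^2A^2)^(-1) y) det(1-zA)^(-1).\<close>
definition rr :: "nat \<Rightarrow> nat \<Rightarrow> complex vec \<Rightarrow> complex vec \<Rightarrow> Hfun" where
  "rr n j x y = (\<lambda>A w. fps_nth
      (Abs_fps (\<lambda>k. if even k then omega n x ((A ^\<^sub>m k) *\<^sub>v y) else 0)
       * inverse (fps_of_poly (detpoly n A))) j)"

text \<open>Brackets of generators; zeta_0, zeta_2, ..., zeta_2K are zeta 0, ..., zeta K.\<close>
fun brgen :: "nat \<Rightarrow> complex mat list \<Rightarrow> (nat \<Rightarrow> complex) \<Rightarrow> nat \<Rightarrow> gen \<Rightarrow> gen \<Rightarrow> Hfun" where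
  "brgen n B \<zeta> K (GS a) (GS b) = genSp (B ! a * B ! b - B ! b * B ! a)"
| "brgen n B \<zeta> K (GS a) (GV k) = genV n (B ! a *\<^sub>v unit_vec (2*n) k)"
| "brgen n B \<zeta> K (GV k) (GS a) = (\<lambda>A w. - genV n (B ! a *\<^sub>v unit_vec (2*n) k) A w)"
| "brgen n B \<zeta> K (GV k) (GV k') =
     (\<lambda>A w. \<Sum>j\<le>K. \<zeta> j * rr n (2*j) (unit_vec (2*n) k) (unit_vec (2*n) k') A w)"

definition pbr :: "nat \<Rightarrow> complex mat list \<Rightarrow> (nat \<Rightarrow> complex) \<Rightarrow> nat \<Rightarrow> Hfun \<Rightarrow> Hfun \<Rightarrow> Hfun" where
  "pbr n B \<zeta> K F G = (\<lambda>A w. \<Sum>a\<in>gens n B. \<Sum>b\<in>gens n B.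
       pd n B a F A w * pd n B b G A w * brgen n B \<zeta> K a b A w)"

definition H_zero :: "nat \<Rightarrow> Hfun \<Rightarrow> bool" where
  "H_zero n F \<longleftrightarrow> (\<forall>A\<in>sp n. \<forall>w\<in>carrier_vec (2*n). F A w = 0)"

end

theory Submission
  imports Defs
begin

text \<open>
  Let \<open>D\<^sub>l\<close> be the element of sp(2n) dual to \<open>B ! l\<close> under the trace form, so that
  \<open>\<partial>/\<partial>e\<^sub>l\<close> is the derivative in direction \<open>D\<^sub>l\<close>. As \<open>\<partial>Q\<^sub>i/\<partial>e\<^sub>l\<close> lies in S(sp(2n)) and
  \<open>v\<close> is linear, the bracket \<open>{\<partial>Q\<^sub>i/\<partial>e\<^sub>l, v}\<close> at \<open>(A, w)\<close> is
  \<open>\<Sum>\<^sub>a d\<^sup>2Q\<^sub>i(A)[D\<^sub>a, D\<^sub>l] \<omega>(B\<^sub>a v, w)\<close>, and contracting with \<open>e(v\<^sub>j) v\<^sub>j\<^sup>*\<close> contributes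
  the factor \<open>-\<omega>(B\<^sub>l w, w)\<close>. Both coefficients are trace pairings \<open>tr(B\<^sub>a X)\<close>,
  \<open>tr(B\<^sub>l Y)\<close> with symmetrised products \<open>X\<close> of \<open>v, w\<close> and \<open>Y\<close> of \<open>w, w\<close> in sp(2n), and
  since \<open>\<Sum>\<^sub>a tr(B\<^sub>a X) D\<^sub>a = X\<close> the whole sum collapses to \<open>d\<^sup>2Q\<^sub>i(A)[X, Y]\<close>.

  By the Leibniz formula \<open>Q\<^sub>i\<close> is a signed sum of principal \<open>2i\<close>-minors, and a second
  derivative replaces two rows of a minor by rows of the two directions. Up to scalars
  \<open>X = v \<otimes> g + w \<otimes> h\<close> and \<open>Y = w \<otimes> g\<close> with \<open>g = \<omega>(w, \<cdot>)\<close>, \<open>h = \<omega>(v, \<cdot>)\<close>: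
  the \<open>v \<otimes> g\<close> part yields minors with two proportional rows, and in the \<open>w \<otimes> h\<close> part
  the two orders of choosing the replaced rows cancel by antisymmetry of the determinant.
\<close>

declare mult_delta_left [simp] mult_delta_right [simp]

section \<open>Coordinates of the symplectic form\<close>

definition partner :: "nat \<Rightarrow> nat" where
  "partner r = (if even r then r + 1 else r - 1)"

definition jsign :: "nat \<Rightarrow> complex" where
  "jsign r = (if even r then 1 else -1)"

lemma partner_less: "r < 2*n \<Longrightarrow> partner r < 2*n"
  unfolding partner_def by (cases "even r"; simp; presburger)

lemma partner_partner [simp]: "partner (partner r) = r"
  unfolding partner_def by (cases "even r"; simp; presburger)

lemma jsign_partner [simp]: "jsign (partner r) = - jsign r"
  unfolding partner_def jsign_def by (cases "even r"; simp; presburger)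

lemma jsign_square [simp]: "jsign r * jsign r = 1"
  unfolding jsign_def by auto

lemma cnj_jsign [simp]: "cnj (jsign r) = jsign r"
  unfolding jsign_def by auto

lemma eq_partner_iff: "s = partner r \<longleftrightarrow> r = partner s"
  by (metis partner_partner)

lemma partner_eq_iff: "partner r = s \<longleftrightarrow> r = partner s"
  by (metis partner_partner)

lemma sum_reindex_partner: "(\<Sum>x<2*n. f x) = (\<Sum>x<2*n. f (partner x))"
  by (rule sum.reindex_bij_witness[where i=partner and j=partner]) (auto simp: partner_less)

lemma Jmat_carrier [simp]: "Jmat n \<in> carrier_mat (2*n) (2*n)"
  unfolding Jmat_def by auto

lemma Jmat_dims [simp]: "dim_row (Jmat n) = 2*n" "dim_col (Jmat n) = 2*n"
  unfolding Jmat_def by auto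

lemma Jmat_index:
  "r < 2*n \<Longrightarrow> s < 2*n \<Longrightarrow> Jmat n $$ (r, s) = (if s = partner r then jsign r else 0)"
  unfolding Jmat_def partner_def jsign_def by (cases "even r"; auto)

lemma omega_expand:
  assumes "x \<in> carrier_vec (2*n)" "y \<in> carrier_vec (2*n)"
  shows "omega n x y = (\<Sum>r<2*n. x $ r * jsign r * y $ partner r)"
proof -
  have "(Jmat n *\<^sub>v y) $ r = jsign r * y $ partner r" if "r < 2*n" for r
  proof -
    have "(Jmat n *\<^sub>v y) $ r = (\<Sum>s\<in>{0..<2*n}. Jmat n $$ (r, s) * y $ s)"
      using that assms by (simp add: mult_mat_vec_def scalar_prod_def row_def)
    also have "\<dots> = (\<Sum>s\<in>{0..<2*n}. if s = partner r then jsign r * y $ s else 0)"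
      by (rule sum.cong) (auto simp: Jmat_index that)
    finally show ?thesis
      using partner_less[OF that] by simp
  qed
  then show ?thesis
    using assms unfolding omega_def scalar_prod_def
    by (auto intro!: sum.cong simp: atLeast0LessThan)
qed

lemma omega_unit_vec_left:
  "i < 2*n \<Longrightarrow> y \<in> carrier_vec (2*n) \<Longrightarrow>
    omega n (unit_vec (2*n) i) y = jsign i * y $ partner i"
  by (simp add: omega_expand unit_vec_def if_distrib[where f="\<lambda>x. x * _"] cong: if_cong)

lemma omega_add_smult_right:
  assumes "x \<in> carrier_vec (2*n)" "y \<in> carrier_vec (2*n)" "u \<in> carrier_vec (2*n)"
  shows "omega n x (y + t \<cdot>\<^sub>v u) = omega n x y + t * omega n x u"
proof -
  have "(y + t \<cdot>\<^sub>v u) $ partner r = y $ partner r + t * u $ partner r" if "r < 2*n" for r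
    using assms partner_less[OF that] by simp
  then show ?thesis
    using assms
    by (simp add: omega_expand sum_distrib_left sum.distrib[symmetric] distrib_left
        distrib_right mult.assoc mult.left_commute)
qed

lemma vstar_spec:
  assumes "j < 2*n"
  shows "vstar n j \<in> carrier_vec (2*n) \<and>
    (\<forall>i<2*n. omega n (unit_vec (2*n) i) (vstar n j) = (if i = j then 1 else 0))"
proof -
  let ?u = "vec (2*n) (\<lambda>c. if partner c = j then jsign j else 0) :: complex vec"
  have "?u \<in> carrier_vec (2*n) \<and>
      (\<forall>i<2*n. omega n (unit_vec (2*n) i) ?u = (if i = j then 1 else 0))"
    by (auto simp: omega_unit_vec_left partner_less)
  then show ?thesis
    unfolding vstar_def by (rule someI)
qed

lemma vstar_carrier [simp]: "j < 2*n \<Longrightarrow> vstar n j \<in> carrier_vec (2*n)"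
  using vstar_spec by blast

lemma vstar_index:
  assumes "j < 2*n" "c < 2*n"
  shows "vstar n j $ c = (if partner c = j then jsign j else 0)"
proof -
  have "omega n (unit_vec (2*n) (partner c)) (vstar n j) = (if partner c = j then 1 else 0)"
    using vstar_spec[OF assms(1)] partner_less[OF assms(2)] by blast
  then have "jsign (partner c) * vstar n j $ c = (if partner c = j then 1 else 0)"
    using omega_unit_vec_left[OF partner_less[OF assms(2)], of "vstar n j"] assms by simp
  then have "jsign (partner c) * (jsign (partner c) * vstar n j $ c) =
      jsign (partner c) * (if partner c = j then 1 else 0)"
    by simp
  then show ?thesis
    by (auto simp: mult.assoc[symmetric])
qed

lemma omega_vstar_right:
  assumes "j < 2*n" "x \<in> carrier_vec (2*n)"
  shows "omega n x (vstar n j) = x $ j"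
  using assms by (simp add: omega_expand vstar_index partner_less if_distrib[where f="\<lambda>x. _ * x"]
      eq_partner_iff cong: if_cong)

lemma omega_vstar_left:
  assumes "j < 2*n" "x \<in> carrier_vec (2*n)"
  shows "omega n (vstar n j) x = - x $ j"
proof -
  have "vstar n j $ r * jsign r * x $ partner r = (if r = partner j then - x $ j else 0)"
    if "r < 2*n" for r
    using assms that by (auto simp: vstar_index partner_eq_iff)
  then have "omega n (vstar n j) x = (\<Sum>r<2*n. if r = partner j then - x $ j else 0)"
    using assms by (simp add: omega_expand)
  then show ?thesis
    using partner_less[OF assms(1)] by simp
qed

section \<open>The trace form on sp(2n) and the dual basis\<close>

lemma sp_carrier: "X \<in> sp n \<Longrightarrow> X \<in> carrier_mat (2*n) (2*n)"
  unfolding sp_def by auto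

lemma sp_iff_entries:
  assumes X: "X \<in> carrier_mat (2*n) (2*n)"
  shows "X \<in> sp n \<longleftrightarrow>
    (\<forall>r<2*n. \<forall>s<2*n. jsign s * X $$ (partner s, r) = jsign r * X $$ (partner r, s))"
proof -
  have entry: "(transpose_mat X * Jmat n + Jmat n * X) $$ (r, s) =
      jsign r * X $$ (partner r, s) - jsign s * X $$ (partner s, r)"
    if "r < 2*n" "s < 2*n" for r s
  proof -
    have "(transpose_mat X * Jmat n) $$ (r, s) =
        (\<Sum>k\<in>{0..<2*n}. if k = partner s then - jsign s * X $$ (partner s, r) else 0)"
      using X that by (auto simp: scalar_prod_def Jmat_index eq_partner_iff[of s] intro!: sum.cong)
    moreover have "(Jmat n * X) $$ (r, s) =
        (\<Sum>k\<in>{0..<2*n}. if k = partner r then jsign r * X $$ (partner r, s) else 0)"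
      using X that by (auto simp: scalar_prod_def Jmat_index intro!: sum.cong)
    ultimately show ?thesis
      using X that partner_less[OF that(1)] partner_less[OF that(2)] by simp
  qed
  have "X \<in> sp n \<longleftrightarrow>
      (\<forall>r<2*n. \<forall>s<2*n. (transpose_mat X * Jmat n + Jmat n * X) $$ (r, s) = 0)"
  proof
    assume "X \<in> sp n"
    then have "transpose_mat X * Jmat n + Jmat n * X = 0\<^sub>m (2*n) (2*n)"
      unfolding sp_def by auto
    then show "\<forall>r<2*n. \<forall>s<2*n. (transpose_mat X * Jmat n + Jmat n * X) $$ (r, s) = 0"
      by simp
  next
    assume "\<forall>r<2*n. \<forall>s<2*n. (transpose_mat X * Jmat n + Jmat n * X) $$ (r, s) = 0"
    then have "transpose_mat X * Jmat n + Jmat n * X = 0\<^sub>m (2*n) (2*n)"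
      using X by (intro eq_matI) auto
    then show "X \<in> sp n"
      unfolding sp_def using X by auto
  qed
  then show ?thesis
    using entry by (auto simp: right_minus_eq)
qed

lemma sp_entries:
  "X \<in> sp n \<Longrightarrow> r < 2*n \<Longrightarrow> s < 2*n \<Longrightarrow>
    jsign s * X $$ (partner s, r) = jsign r * X $$ (partner r, s)"
  using sp_iff_entries sp_carrier by blast

lemma sp_linear_combination:
  assumes "\<And>a. a \<in> S \<Longrightarrow> M a \<in> sp n" and "X \<in> sp n"
  shows "mat (2*n) (2*n) (\<lambda>rs. (\<Sum>a\<in>S. c a * M a $$ rs) - d * X $$ rs) \<in> sp n"
proof -
  have "jsign s * ((\<Sum>a\<in>S. c a * M a $$ (partner s, r)) - d * X $$ (partner s, r)) =
      jsign r * ((\<Sum>a\<in>S. c a * M a $$ (partner r, s)) - d * X $$ (partner r, s))"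
    if "r < 2*n" "s < 2*n" for r s
  proof -
    have "\<forall>a\<in>S. jsign s * M a $$ (partner s, r) = jsign r * M a $$ (partner r, s)"
      using sp_entries assms(1) that by blast
    then have "(\<Sum>a\<in>S. c a * (jsign s * M a $$ (partner s, r))) - d * (jsign s * X $$ (partner s, r)) =
        (\<Sum>a\<in>S. c a * (jsign r * M a $$ (partner r, s))) - d * (jsign r * X $$ (partner r, s))"
      using sp_entries[OF assms(2) that] by (auto intro!: sum.cong)
    then show ?thesis
      by (simp add: sum_distrib_left right_diff_distrib mult.left_commute)
  qed
  then show ?thesis
    by (subst sp_iff_entries) (auto simp: partner_less)
qed

lemma zero_in_sp: "0\<^sub>m (2*n) (2*n) \<in> sp n"
  by (subst sp_iff_entries) (auto simp: partner_less)

lemma sp_sum_smult: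
  assumes "\<And>a. a \<in> S \<Longrightarrow> M a \<in> sp n"
  shows "mat (2*n) (2*n) (\<lambda>rs. \<Sum>a\<in>S. c a * M a $$ rs) \<in> sp n"
  using sp_linear_combination[OF assms zero_in_sp, where c=c and d=0] by simp

lemma sp_conj_transpose:
  assumes X: "X \<in> sp n"
  shows "mat (2*n) (2*n) (\<lambda>(r, s). cnj (X $$ (s, r))) \<in> sp n"
proof -
  have "jsign s * cnj (X $$ (r, partner s)) = jsign r * cnj (X $$ (s, partner r))"
    if "r < 2*n" "s < 2*n" for r s
  proof -
    have "jsign (partner r) * X $$ (partner (partner r), partner s) =
        jsign (partner s) * X $$ (partner (partner s), partner r)"
      using sp_entries[OF X partner_less[OF that(2)] partner_less[OF that(1)]] .
    then have "jsign r * jsign s * (jsign r * X $$ (r, partner s)) =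
        jsign r * jsign s * (jsign s * X $$ (s, partner r))"
      by simp
    moreover have "jsign r * jsign s * jsign r = jsign s" "jsign r * jsign s * jsign s = jsign r"
      by (metis jsign_square mult.commute mult.left_commute mult_1_right)+
    ultimately have "jsign s * X $$ (r, partner s) = jsign r * X $$ (s, partner r)"
      by (simp only: mult.assoc[symmetric])
    then show ?thesis
      by (metis complex_cnj_mult cnj_jsign)
  qed
  then show ?thesis
    by (subst sp_iff_entries) (auto simp: partner_less)
qed

text \<open>\<open>tr(X Y)\<close> written out on the index range, so that no dimension hypotheses are needed.\<close>

definition trace_form :: "nat \<Rightarrow> complex mat \<Rightarrow> complex mat \<Rightarrow> complex" where
  "trace_form n X Y = (\<Sum>x<2*n. \<Sum>y<2*n. X $$ (x, y) * Y $$ (y, x))"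

lemma mtrace_mult_eq_trace_form:
  "X \<in> carrier_mat (2*n) (2*n) \<Longrightarrow> Y \<in> carrier_mat (2*n) (2*n) \<Longrightarrow>
    mtrace (X * Y) = trace_form n X Y"
  unfolding mtrace_def trace_form_def
  by (auto simp: scalar_prod_def atLeast0LessThan intro!: sum.cong)

lemma trace_form_sum_left:
  "trace_form n (mat (2*n) (2*n) (\<lambda>rs. \<Sum>a\<in>S. c a * M a $$ rs)) Y =
    (\<Sum>a\<in>S. c a * trace_form n (M a) Y)"
  unfolding trace_form_def
  by (simp add: sum_distrib_right sum_distrib_left mult.assoc)
    (subst sum.swap, rule sum.cong, simp, subst sum.swap, simp)

lemma trace_form_lincomb_right:
  "trace_form n X (lincomb_mats n B c) = (\<Sum>b<length B. c b * trace_form n X (B ! b))"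
  unfolding trace_form_def lincomb_mats_def
  by (simp add: sum_distrib_right sum_distrib_left mult.assoc mult.left_commute)
    (subst sum.swap, rule sum.cong, simp, subst sum.swap, simp)

lemma sp_basis_in_sp: "is_sp_basis n B \<Longrightarrow> a < length B \<Longrightarrow> B ! a \<in> sp n"
  unfolding is_sp_basis_def by auto

lemma lincomb_mats_in_sp: "is_sp_basis n B \<Longrightarrow> lincomb_mats n B c \<in> sp n"
  unfolding lincomb_mats_def by (rule sp_sum_smult) (auto intro: sp_basis_in_sp)

text \<open>sp(2n) is closed under conjugate transposition, and \<open>tr(X\<^sup>* X) = \<Sum>|X\<^sub>x\<^sub>y|\<^sup>2\<close>.\<close>

lemma trace_form_nondegenerate:
  assumes bas: "is_sp_basis n B" and Y: "Y \<in> sp n"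
    and orth: "\<forall>a<length B. trace_form n (B ! a) Y = 0"
  shows "\<forall>x<2*n. \<forall>y<2*n. Y $$ (x, y) = 0"
proof -
  let ?Y' = "mat (2*n) (2*n) (\<lambda>(r, s). cnj (Y $$ (s, r)))"
  obtain d where d: "?Y' = lincomb_mats n B d"
    using sp_conj_transpose[OF Y] bas unfolding is_sp_basis_def by blast
  have "trace_form n ?Y' Y = (\<Sum>a<length B. d a * trace_form n (B ! a) Y)"
    unfolding d lincomb_mats_def by (rule trace_form_sum_left)
  then have "trace_form n ?Y' Y = 0"
    using orth by simp
  moreover have "trace_form n ?Y' Y = (\<Sum>x<2*n. \<Sum>y<2*n. complex_of_real ((cmod (Y $$ (y, x)))\<^sup>2))"
    unfolding trace_form_def
    by (auto intro!: sum.cong simp: complex_norm_square mult.commute simp del: of_real_power)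
  ultimately have "(\<Sum>x<2*n. \<Sum>y<2*n. (cmod (Y $$ (y, x)))\<^sup>2) = 0"
    by (metis (no_types, lifting) of_real_eq_0_iff of_real_sum sum.cong)
  then have "\<forall>x<2*n. \<forall>y<2*n. (cmod (Y $$ (y, x)))\<^sup>2 = 0"
    by (simp add: sum_nonneg_eq_0_iff sum_nonneg)
  then show ?thesis
    by auto
qed

definition gram_mat :: "nat \<Rightarrow> complex mat list \<Rightarrow> complex mat" where
  "gram_mat n B = mat (length B) (length B) (\<lambda>(a, b). trace_form n (B ! a) (B ! b))"

lemma gram_mat_mult_vec_index:
  "c \<in> carrier_vec (length B) \<Longrightarrow> a < length B \<Longrightarrow>
    (gram_mat n B *\<^sub>v c) $ a = trace_form n (B ! a) (lincomb_mats n B (\<lambda>b. c $ b))"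
  unfolding trace_form_lincomb_right gram_mat_def
  by (auto simp: scalar_prod_def atLeast0LessThan mult.commute intro!: sum.cong)

lemma det_gram_mat_nonzero:
  assumes bas: "is_sp_basis n B"
  shows "det (gram_mat n B) \<noteq> 0"
proof
  assume "det (gram_mat n B) = 0"
  then obtain c where c: "c \<in> carrier_vec (length B)" "c \<noteq> 0\<^sub>v (length B)"
      "gram_mat n B *\<^sub>v c = 0\<^sub>v (length B)"
    by (subst (asm) det_0_iff_vec_prod_zero[of _ "length B"]) (auto simp: gram_mat_def)
  let ?X = "lincomb_mats n B (\<lambda>b. c $ b)"
  have "\<forall>a<length B. trace_form n (B ! a) ?X = 0"
    using c(1,3) by (simp flip: gram_mat_mult_vec_index)
  then have "?X = 0\<^sub>m (2*n) (2*n)"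
    using trace_form_nondegenerate[OF bas lincomb_mats_in_sp[OF bas]]
    by (auto simp: lincomb_mats_def intro!: eq_matI)
  then have "\<forall>l<length B. c $ l = 0"
    using bas unfolding is_sp_basis_def by blast
  with c(1,2) show False
    by (auto intro!: eq_vecI)
qed

lemma dual_basis_exists:
  assumes bas: "is_sp_basis n B" and l: "l < length B"
  shows "\<exists>X. X \<in> sp n \<and>
    (\<forall>l'<length B. mtrace ((B ! l') * X) = (if l' = l then 1 else 0))"
proof -
  let ?L = "length B"
  let ?G = "gram_mat n B"
  let ?c = "(1 / det ?G) \<cdot>\<^sub>v (adj_mat ?G *\<^sub>v unit_vec ?L l)"
  let ?X = "lincomb_mats n B (\<lambda>b. ?c $ b)"
  have G: "?G \<in> carrier_mat ?L ?L"
    by (simp add: gram_mat_def)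
  note adj = adj_mat(1)[OF G] carrier_matD[OF adj_mat(1)[OF G]]
  have c: "?c \<in> carrier_vec ?L"
    using adj by auto
  have "?G *\<^sub>v ?c = (1 / det ?G) \<cdot>\<^sub>v ((?G * adj_mat ?G) *\<^sub>v unit_vec ?L l)"
    using adj G by (simp add: mult_mat_vec assoc_mult_mat_vec)
  also have "\<dots> = (1 / det ?G) \<cdot>\<^sub>v (det ?G \<cdot>\<^sub>v unit_vec ?L l)"
    unfolding adj_mat(2)[OF G] by (auto intro!: eq_vecI simp: scalar_prod_def unit_vec_def)
  finally have Gc: "?G *\<^sub>v ?c = unit_vec ?L l"
    using det_gram_mat_nonzero[OF bas] by (auto intro!: eq_vecI)
  have "mtrace ((B ! a) * ?X) = (if a = l then 1 else 0)" if "a < ?L" for a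
  proof -
    have "mtrace ((B ! a) * ?X) = trace_form n (B ! a) ?X"
      using sp_carrier[OF sp_basis_in_sp[OF bas that]] sp_carrier[OF lincomb_mats_in_sp[OF bas]]
      by (rule mtrace_mult_eq_trace_form)
    also have "\<dots> = (?G *\<^sub>v ?c) $ a"
      by (rule gram_mat_mult_vec_index[symmetric, OF c that])
    finally show ?thesis
      using Gc that l by simp
  qed
  then show ?thesis
    using lincomb_mats_in_sp[OF bas] by blast
qed

lemma
  assumes bas: "is_sp_basis n B" and l: "l < length B"
  shows dualB_in_sp: "dualB n B l \<in> sp n"
    and trace_form_dualB:
      "a < length B \<Longrightarrow> trace_form n (B ! a) (dualB n B l) = (if a = l then 1 else 0)"
proof -
  have spec: "dualB n B l \<in> sp n \<and>
      (\<forall>l'<length B. mtrace ((B ! l') * dualB n B l) = (if l' = l then 1 else 0))"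
    unfolding dualB_def by (rule someI_ex[OF dual_basis_exists[OF assms]])
  then show "dualB n B l \<in> sp n"
    by blast
  show "trace_form n (B ! a) (dualB n B l) = (if a = l then 1 else 0)" if a: "a < length B"
    using spec a mtrace_mult_eq_trace_form[OF sp_carrier[OF sp_basis_in_sp[OF bas a]]
        sp_carrier[of "dualB n B l"]]
    by auto
qed

lemma sp_dual_expansion:
  assumes bas: "is_sp_basis n B" and X: "X \<in> sp n" and x: "x < 2*n" and y: "y < 2*n"
  shows "(\<Sum>a<length B. trace_form n (B ! a) X * dualB n B a $$ (x, y)) = X $$ (x, y)"
proof -
  let ?W = "mat (2*n) (2*n)
    (\<lambda>rs. (\<Sum>a\<in>{..<length B}. trace_form n (B ! a) X * dualB n B a $$ rs) - 1 * X $$ rs)"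
  have W: "?W \<in> sp n"
    by (rule sp_linear_combination[OF _ X]) (auto intro: dualB_in_sp[OF bas])
  have "trace_form n (B ! b) ?W = 0" if b: "b < length B" for b
  proof -
    have "trace_form n (B ! b) ?W =
        (\<Sum>a<length B. trace_form n (B ! a) X * trace_form n (B ! b) (dualB n B a))
          - trace_form n (B ! b) X"
      unfolding trace_form_def
      by (simp add: sum_distrib_right sum_distrib_left mult.assoc mult.left_commute
          right_diff_distrib left_diff_distrib sum_subtractf)
        (subst sum.swap, rule sum.cong, simp, subst sum.swap, simp)
    also have "\<dots> = (\<Sum>a<length B. if a = b then trace_form n (B ! a) X else 0)
          - trace_form n (B ! b) X"
      using trace_form_dualB[OF bas _ b] by (auto intro!: sum.cong)
    finally show ?thesis
      using b by simp
  qed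
  then have "?W $$ (x, y) = 0"
    using trace_form_nondegenerate[OF bas W] x y by blast
  then show ?thesis
    using x y by simp
qed

section \<open>\<open>Q\<^sub>i\<close> and its derivatives as functions of the matrix entries\<close>

lemma prod_monom:
  "finite T \<Longrightarrow> (\<Prod>x\<in>T. monom (c x) (k x)) = monom (\<Prod>x\<in>T. c x) (\<Sum>x\<in>T. k x)"
  by (induction T rule: finite_induct) (simp_all add: mult_monom)

lemma coeff_prod_linear_polys:
  assumes "finite S"
  shows "coeff (\<Prod>x\<in>S. [:a x, b x:]) d =
    (\<Sum>T\<in>Pow S. if card T = d then (\<Prod>x\<in>T. b x) * (\<Prod>x\<in>S - T. a x) else 0)"
proof -
  have "[:a x, b x:] = monom (b x) 1 + monom (a x) 0" for x
    by (rule poly_eqI) (simp add: coeff_monom coeff_pCons split: nat.split)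
  then have "(\<Prod>x\<in>S. [:a x, b x:]) =
      (\<Sum>T\<in>Pow S. (\<Prod>x\<in>T. monom (b x) 1) * (\<Prod>x\<in>S - T. monom (a x) 0))"
    using prod_add[OF assms] by simp
  also have "\<dots> = (\<Sum>T\<in>Pow S. monom ((\<Prod>x\<in>T. b x) * (\<Prod>x\<in>S - T. a x)) (card T))"
    using assms by (intro sum.cong refl) (auto simp: prod_monom mult_monom finite_subset)
  finally show ?thesis
    by (simp add: coeff_sum coeff_monom)
qed

definition perms :: "nat \<Rightarrow> (nat \<Rightarrow> nat) set" where
  "perms n = {p. p permutes {0..<2*n}}"

definition minor_sets :: "nat \<Rightarrow> nat \<Rightarrow> nat set set" where
  "minor_sets n i = {T \<in> Pow {0..<2*n}. card T = 2*i}"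

lemma finite_perms [simp]: "finite (perms n)"
  unfolding perms_def by (simp add: finite_permutations)

lemma finite_minor_sets [simp]: "finite (minor_sets n i)"
  unfolding minor_sets_def by simp

lemma minor_sets_finite: "T \<in> minor_sets n i \<Longrightarrow> finite T"
  unfolding minor_sets_def by (auto intro: finite_subset)

lemma minor_sets_less: "T \<in> minor_sets n i \<Longrightarrow> m \<in> T \<Longrightarrow> m < 2*n"
  unfolding minor_sets_def by auto

lemma perms_minor_sets_less:
  "p \<in> perms n \<Longrightarrow> T \<in> minor_sets n i \<Longrightarrow> j \<in> T \<Longrightarrow> j < 2*n \<and> p j < 2*n"
  unfolding perms_def minor_sets_def using permutes_in_image[of p "{0..<2*n}" j] by auto

text \<open>
  In the Leibniz expansion of \<open>det(1 - zA)\<close> the term of \<open>p\<close> is \<open>sign p \<Prod>\<^sub>x [:\<delta>\<^sub>x\<^sub>,\<^sub>p\<^sub>x, -A\<^sub>x\<^sub>,\<^sub>p\<^sub>x:]\<close>;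
  choosing the \<open>z\<close>-term exactly on the rows in \<open>T\<close> forces \<open>p\<close> to fix all other rows.
\<close>

definition leibniz_weight :: "nat \<Rightarrow> (nat \<Rightarrow> nat) \<Rightarrow> nat set \<Rightarrow> complex" where
  "leibniz_weight n p T = of_int (sign p) * (\<Prod>x\<in>{0..<2*n} - T. if x = p x then 1 else 0)"

definition Q_entries :: "nat \<Rightarrow> nat \<Rightarrow> (nat \<Rightarrow> nat \<Rightarrow> complex) \<Rightarrow> complex" where
  "Q_entries n i a =
    (\<Sum>p\<in>perms n. \<Sum>T\<in>minor_sets n i. leibniz_weight n p T * (\<Prod>j\<in>T. - a j (p j)))"

definition Q_entries_deriv ::
    "nat \<Rightarrow> nat \<Rightarrow> (nat \<Rightarrow> nat \<Rightarrow> complex) \<Rightarrow> (nat \<Rightarrow> nat \<Rightarrow> complex) \<Rightarrow> complex" where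
  "Q_entries_deriv n i a y = (\<Sum>p\<in>perms n. \<Sum>T\<in>minor_sets n i. leibniz_weight n p T *
      (\<Sum>m\<in>T. (- y m (p m)) * (\<Prod>j\<in>T-{m}. - a j (p j))))"

definition Q_entries_deriv2 :: "nat \<Rightarrow> nat \<Rightarrow> (nat \<Rightarrow> nat \<Rightarrow> complex) \<Rightarrow>
    (nat \<Rightarrow> nat \<Rightarrow> complex) \<Rightarrow> (nat \<Rightarrow> nat \<Rightarrow> complex) \<Rightarrow> complex" where
  "Q_entries_deriv2 n i a x y = (\<Sum>p\<in>perms n. \<Sum>T\<in>minor_sets n i. leibniz_weight n p T *
      (\<Sum>m\<in>T. (- y m (p m)) *
        (\<Sum>k\<in>T-{m}. (- x k (p k)) * (\<Prod>j\<in>T-{m}-{k}. - a j (p j)))))"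

abbreviation entries :: "complex mat \<Rightarrow> nat \<Rightarrow> nat \<Rightarrow> complex" where
  "entries M \<equiv> \<lambda>u v. M $$ (u, v)"

lemma char_poly_mat_index:
  fixes A :: "complex mat"
  assumes "A \<in> carrier_mat (2*n) (2*n)" "x < 2*n" "y < 2*n"
  shows "(1\<^sub>m (2*n) - map_mat (\<lambda>a. [:0, a:]) A) $$ (x, y) = [:if x = y then 1 else 0, - A $$ (x, y):]"
proof -
  have "(1\<^sub>m (2*n) - map_mat (\<lambda>a. [:0, a:]) A) $$ (x, y) = (if x = y then 1 else 0) - [:0, A $$ (x, y):]"
    using assms by simp
  also have "\<dots> = [:if x = y then 1 else 0, - A $$ (x, y):]"
    by (cases "x = y"; rule poly_eqI; simp add: coeff_pCons split: nat.split)
  finally show ?thesis .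
qed

lemma Qf_eq_Q_entries:
  assumes A: "A \<in> carrier_mat (2*n) (2*n)"
  shows "Qf n i A w = Q_entries n i (entries A)"
proof -
  let ?P = "1\<^sub>m (2*n) - map_mat (\<lambda>a. [:0, a:]) A"
  let ?lin = "\<lambda>p x. [:if x = p x then 1 else 0, - A $$ (x, p x):]"
  have P: "?P \<in> carrier_mat (2*n) (2*n)"
    using A by auto
  have entry: "?P $$ (x, p x) = ?lin p x" if "p \<in> perms n" "x \<in> {0..<2*n}" for p x
    using that permutes_in_image[of p "{0..<2*n}" x]
    by (intro char_poly_mat_index[OF A]) (auto simp: perms_def)
  have "detpoly n A = (\<Sum>p\<in>perms n. of_int (sign p) * (\<Prod>x\<in>{0..<2*n}. ?P $$ (x, p x)))"
    unfolding detpoly_def det_def'[OF P] perms_def ..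
  also have "\<dots> = (\<Sum>p\<in>perms n. of_int (sign p) * (\<Prod>x\<in>{0..<2*n}. ?lin p x))"
    using entry by (intro sum.cong refl arg_cong[where f="\<lambda>q. _ * q"] prod.cong) auto
  finally have "Qf n i A w =
      (\<Sum>p\<in>perms n. of_int (sign p) * coeff (\<Prod>x\<in>{0..<2*n}. ?lin p x) (2*i))"
    unfolding Qf_def by (simp add: coeff_sum of_int_poly)
  also have "\<dots> = Q_entries n i (entries A)"
    unfolding Q_entries_def coeff_prod_linear_polys[OF finite_atLeastLessThan]
      minor_sets_def leibniz_weight_def
    by (intro sum.cong refl, subst sum.inter_filter) (auto simp: sum_distrib_left ac_simps intro!: sum.cong)
  finally show ?thesis .
qed

lemma has_field_derivative_prod_affine:
  "((\<lambda>t. \<Prod>j\<in>T. - (a j + t * b j)) has_field_derivative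
    (\<Sum>m\<in>T. (- b m) * (\<Prod>j\<in>T-{m}. - (a j :: complex)))) (at 0)"
proof -
  have "((\<lambda>t. \<Prod>j\<in>T. - (a j + t * b j)) has_field_derivative
      (\<Sum>m\<in>T. (- b m) * (\<Prod>j\<in>T-{m}. - (a j + 0 * b j)))) (at 0)"
    by (rule has_field_derivative_prod) (auto intro!: derivative_eq_intros)
  then show ?thesis
    by simp
qed

lemma Q_entries_has_derivative:
  "((\<lambda>t. Q_entries n i (\<lambda>u v. a u v + t * y u v)) has_field_derivative
    Q_entries_deriv n i a y) (at 0)"
  unfolding Q_entries_def Q_entries_deriv_def
  by (intro DERIV_sum DERIV_cmult has_field_derivative_prod_affine)

lemma Q_entries_deriv_has_derivative:
  "((\<lambda>s. Q_entries_deriv n i (\<lambda>u v. a u v + s * x u v) y) has_field_derivative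
    Q_entries_deriv2 n i a x y) (at 0)"
  unfolding Q_entries_deriv_def Q_entries_deriv2_def
  by (intro DERIV_sum DERIV_cmult has_field_derivative_prod_affine)

lemma deriv0_eqI: "(f has_field_derivative D) (at 0) \<Longrightarrow> deriv0 f = D"
  unfolding deriv0_def by (rule some_equality) (auto intro: DERIV_unique)

lemma deriv0_const: "deriv0 (\<lambda>t. c) = 0"
  by (rule deriv0_eqI) (rule DERIV_const)

abbreviation eq_on_indices :: "nat \<Rightarrow> (nat \<Rightarrow> nat \<Rightarrow> complex) \<Rightarrow> (nat \<Rightarrow> nat \<Rightarrow> complex) \<Rightarrow> bool"
  where "eq_on_indices n a a' \<equiv> \<forall>u<2*n. \<forall>v<2*n. a u v = a' u v"

lemma eq_on_indices_perm_entry: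
  "eq_on_indices n a a' \<Longrightarrow> p \<in> perms n \<Longrightarrow> T \<in> minor_sets n i \<Longrightarrow> j \<in> T \<Longrightarrow>
    a j (p j) = a' j (p j)"
  using perms_minor_sets_less by blast

lemma Q_entries_cong: "Q_entries n i a = Q_entries n i a'" if "eq_on_indices n a a'"
  unfolding Q_entries_def
  by (intro sum.cong refl arg_cong[where f="\<lambda>q. _ * q"] prod.cong) (auto simp: eq_on_indices_perm_entry[OF that])

lemma Q_entries_deriv_cong:
  assumes "eq_on_indices n a a'" "eq_on_indices n y y'"
  shows "Q_entries_deriv n i a y = Q_entries_deriv n i a' y'"
  unfolding Q_entries_deriv_def
  by (intro sum.cong refl arg_cong[where f="\<lambda>q. _ * q"] arg_cong2[where f="(*)"]
      arg_cong[where f=uminus] prod.cong)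
    (auto simp: eq_on_indices_perm_entry[OF assms(1)] eq_on_indices_perm_entry[OF assms(2)])

lemma Q_entries_deriv2_cong:
  assumes "eq_on_indices n a a'" "eq_on_indices n x x'" "eq_on_indices n y y'"
  shows "Q_entries_deriv2 n i a x y = Q_entries_deriv2 n i a' x' y'"
  unfolding Q_entries_deriv2_def
  by (intro sum.cong refl arg_cong[where f="\<lambda>q. _ * q"] arg_cong2[where f="(*)"]
      arg_cong[where f=uminus] prod.cong)
    (auto simp: eq_on_indices_perm_entry[OF assms(1)] eq_on_indices_perm_entry[OF assms(2)]
      eq_on_indices_perm_entry[OF assms(3)])

lemma Q_entries_deriv2_add_left:
  "Q_entries_deriv2 n i a (\<lambda>u v. x1 u v + x2 u v) y = Q_entries_deriv2 n i a x1 y + Q_entries_deriv2 n i a x2 y"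
  unfolding Q_entries_deriv2_def by (simp add: algebra_simps sum.distrib sum_subtractf sum_negf)

lemma Q_entries_deriv2_add_right:
  "Q_entries_deriv2 n i a x (\<lambda>u v. y1 u v + y2 u v) = Q_entries_deriv2 n i a x y1 + Q_entries_deriv2 n i a x y2"
  unfolding Q_entries_deriv2_def by (simp add: algebra_simps sum.distrib sum_subtractf sum_negf)

lemma Q_entries_deriv2_scale_left:
  "Q_entries_deriv2 n i a (\<lambda>u v. c * x u v) y = c * Q_entries_deriv2 n i a x y"
  unfolding Q_entries_deriv2_def by (simp add: sum_distrib_left mult_ac)

lemma Q_entries_deriv2_scale_right:
  "Q_entries_deriv2 n i a x (\<lambda>u v. c * y u v) = c * Q_entries_deriv2 n i a x y"
  unfolding Q_entries_deriv2_def by (simp add: sum_distrib_left mult_ac)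

lemma Q_entries_deriv2_sum_left:
  assumes "finite S"
  shows "Q_entries_deriv2 n i a (\<lambda>u v. \<Sum>s\<in>S. c s * x s u v) y =
    (\<Sum>s\<in>S. c s * Q_entries_deriv2 n i a (x s) y)"
  using assms
proof (induction S rule: finite_induct)
  case empty
  show ?case
    using Q_entries_deriv2_scale_left[of n i a 0 "\<lambda>_ _. 0" y] by simp
next
  case (insert s S)
  then show ?case
    by (simp add: Q_entries_deriv2_add_left Q_entries_deriv2_scale_left)
qed

lemma Q_entries_deriv2_sum_right:
  assumes "finite S"
  shows "Q_entries_deriv2 n i a x (\<lambda>u v. \<Sum>s\<in>S. c s * y s u v) =
    (\<Sum>s\<in>S. c s * Q_entries_deriv2 n i a x (y s))"
  using assms
proof (induction S rule: finite_induct)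
  case empty
  show ?case
    using Q_entries_deriv2_scale_right[of n i a x 0 "\<lambda>_ _. 0"] by simp
next
  case (insert s S)
  then show ?case
    by (simp add: Q_entries_deriv2_add_right Q_entries_deriv2_scale_right)
qed

abbreviation minor_rest :: "(nat \<Rightarrow> nat \<Rightarrow> complex) \<Rightarrow> (nat \<Rightarrow> nat) \<Rightarrow> nat set \<Rightarrow> nat \<Rightarrow> nat \<Rightarrow> complex"
  where "minor_rest a p T m k \<equiv> \<Prod>j\<in>T-{m}-{k}. - a j (p j)"

lemma Q_entries_deriv2_reorder:
  "Q_entries_deriv2 n i a x y = (\<Sum>T\<in>minor_sets n i. \<Sum>m\<in>T. \<Sum>k\<in>T-{m}. \<Sum>p\<in>perms n.
     leibniz_weight n p T * (y m (p m) * (x k (p k) * minor_rest a p T m k)))"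
proof -
  have "Q_entries_deriv2 n i a x y = (\<Sum>p\<in>perms n. \<Sum>T\<in>minor_sets n i. \<Sum>m\<in>T. \<Sum>k\<in>T-{m}.
      leibniz_weight n p T * (y m (p m) * (x k (p k) * minor_rest a p T m k)))"
    unfolding Q_entries_deriv2_def by (simp add: sum_distrib_left)
  also have "\<dots> = (\<Sum>T\<in>minor_sets n i. \<Sum>p\<in>perms n. \<Sum>m\<in>T. \<Sum>k\<in>T-{m}.
      leibniz_weight n p T * (y m (p m) * (x k (p k) * minor_rest a p T m k)))"
    by (rule sum.swap)
  also have "\<dots> = (\<Sum>T\<in>minor_sets n i. \<Sum>m\<in>T. \<Sum>p\<in>perms n. \<Sum>k\<in>T-{m}.
      leibniz_weight n p T * (y m (p m) * (x k (p k) * minor_rest a p T m k)))"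
    by (intro sum.cong refl) (rule sum.swap)
  also have "\<dots> = (\<Sum>T\<in>minor_sets n i. \<Sum>m\<in>T. \<Sum>k\<in>T-{m}. \<Sum>p\<in>perms n.
      leibniz_weight n p T * (y m (p m) * (x k (p k) * minor_rest a p T m k)))"
    by (intro sum.cong refl) (rule sum.swap)
  finally show ?thesis .
qed

lemma perms_compose_swap: "p \<in> perms n \<Longrightarrow> m < 2*n \<Longrightarrow> k < 2*n \<Longrightarrow> p \<circ> transpose m k \<in> perms n"
  unfolding perms_def by (auto intro!: permutes_compose permutes_swap_id)

lemma sum_perms_compose_swap:
  assumes "m < 2*n" "k < 2*n"
  shows "(\<Sum>p\<in>perms n. F (p \<circ> transpose m k)) = (\<Sum>p\<in>perms n. F p)"
  by (rule sum.reindex_bij_witness[where i="\<lambda>p. p \<circ> transpose m k" and j="\<lambda>p. p \<circ> transpose m k"])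
    (auto simp: comp_assoc perms_compose_swap assms)

lemma leibniz_weight_compose_swap:
  assumes p: "p \<in> perms n" and T: "T \<in> minor_sets n i" and "m \<in> T" "k \<in> T" "m \<noteq> k"
  shows "leibniz_weight n (p \<circ> transpose m k) T = - leibniz_weight n p T"
proof -
  have "sign (p \<circ> transpose m k) = sign p * sign (transpose m k)"
    using p unfolding perms_def
    by (intro sign_compose) (auto intro: permutes_imp_permutation permutation_swap_id)
  then have "sign (p \<circ> transpose m k) = - sign p"
    using \<open>m \<noteq> k\<close> by (simp add: sign_swap_id)
  moreover have "(\<Prod>x\<in>{0..<2*n} - T. if x = (p \<circ> transpose m k) x then 1 else 0) =
      (\<Prod>x\<in>{0..<2*n} - T. if x = p x then (1::complex) else 0)"
    using \<open>m \<in> T\<close> \<open>k \<in> T\<close> by (intro prod.cong) (auto simp: Transposition.transpose_def)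
  ultimately show ?thesis
    unfolding leibniz_weight_def by simp
qed

lemma minor_rest_compose_swap:
  "m \<in> T \<Longrightarrow> k \<in> T \<Longrightarrow> minor_rest a (p \<circ> transpose m k) T m k = minor_rest a p T m k"
  by (intro prod.cong) auto

lemma sum_offdiag_antisym:
  fixes G :: "nat \<Rightarrow> nat \<Rightarrow> complex"
  assumes "finite T" and antisym: "\<And>m k. m \<in> T \<Longrightarrow> k \<in> T \<Longrightarrow> m \<noteq> k \<Longrightarrow> G k m = - G m k"
  shows "(\<Sum>m\<in>T. \<Sum>k\<in>T-{m}. G m k) = 0"
proof -
  let ?H = "\<lambda>m k. if k \<noteq> m then G m k else 0"
  have offdiag: "(\<Sum>k\<in>T-{m}. G m k) = (\<Sum>k\<in>T. ?H m k)" for m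
  proof -
    have "T - {m} = {k\<in>T. k \<noteq> m}"
      by auto
    then show ?thesis
      by (simp only: sum.inter_filter[OF assms(1)])
  qed
  have "?H k m = - ?H m k" if "m \<in> T" "k \<in> T" for m k
    using antisym[OF that] by (cases "m = k") auto
  then have "(\<Sum>m\<in>T. \<Sum>k\<in>T. ?H m k) = (\<Sum>k\<in>T. \<Sum>m\<in>T. - ?H k m)"
    by (subst sum.swap) (intro sum.cong refl, metis add.inverse_inverse)
  also have "\<dots> = - (\<Sum>k\<in>T. \<Sum>m\<in>T. ?H k m)"
    by (simp only: sum_negf)
  finally show ?thesis
    by (simp only: offdiag) simp
qed

text \<open>
  The second derivative of a minor along \<open>x \<otimes> g\<close> and \<open>y \<otimes> h\<close> (with \<open>(x \<otimes> g) k c = x k * g c\<close>)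
  replaces two of its rows by multiples of \<open>g\<close> and \<open>h\<close>. Composing \<open>p\<close> with the transposition of
  the two replaced rows exchanges \<open>g\<close> and \<open>h\<close> and flips the sign.
\<close>

lemma Q_entries_deriv2_same_covector:
  "Q_entries_deriv2 n i a (\<lambda>k c. x k * g c) (\<lambda>m c. y m * g c) = 0"
proof -
  have "(\<Sum>p\<in>perms n. leibniz_weight n p T * (y m * g (p m) * (x k * g (p k) * minor_rest a p T m k))) = 0"
    if T: "T \<in> minor_sets n i" and m: "m \<in> T" and k: "k \<in> T - {m}" for T m k
  proof -
    let ?F = "\<lambda>p. leibniz_weight n p T * (y m * g (p m) * (x k * g (p k) * minor_rest a p T m k))"
    have mk: "m < 2*n" "k < 2*n" "k \<in> T" "m \<noteq> k"
      using minor_sets_less[OF T] m k by auto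
    have "(\<Sum>p\<in>perms n. ?F p) = (\<Sum>p\<in>perms n. ?F (p \<circ> transpose m k))"
      by (rule sum_perms_compose_swap[OF mk(1,2), symmetric])
    also have "\<dots> = (\<Sum>p\<in>perms n. - ?F p)"
    proof (rule sum.cong[OF refl])
      fix p assume p: "p \<in> perms n"
      have "?F (p \<circ> transpose m k) = - leibniz_weight n p T *
          (y m * g (p k) * (x k * g (p m) * minor_rest a p T m k))"
        unfolding leibniz_weight_compose_swap[OF p T m mk(3,4)] minor_rest_compose_swap[OF m mk(3)]
        by simp
      then show "?F (p \<circ> transpose m k) = - ?F p"
        by (simp add: mult_ac)
    qed
    finally show ?thesis
      by (simp add: sum_negf)
  qed
  then show ?thesis
    unfolding Q_entries_deriv2_reorder by simp
qed

lemma Q_entries_deriv2_same_vector: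
  "Q_entries_deriv2 n i a (\<lambda>k c. x k * h c) (\<lambda>m c. x m * g c) = 0"
proof -
  let ?G = "\<lambda>T m k. \<Sum>p\<in>perms n. leibniz_weight n p T * (x m * g (p m) * (x k * h (p k) * minor_rest a p T m k))"
  have "?G T k m = - ?G T m k"
    if T: "T \<in> minor_sets n i" and m: "m \<in> T" and k: "k \<in> T" and "m \<noteq> k" for T m k
  proof -
    have mk: "m < 2*n" "k < 2*n"
      using minor_sets_less[OF T] m k by auto
    have D: "T - {k} - {m} = T - {m} - {k}"
      by auto
    have "?G T k m = (\<Sum>p\<in>perms n. leibniz_weight n (p \<circ> transpose m k) T *
        (x k * g ((p \<circ> transpose m k) k) * (x m * h ((p \<circ> transpose m k) m) *
          minor_rest a (p \<circ> transpose m k) T m k)))"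
      unfolding D by (rule sum_perms_compose_swap[OF mk, of "\<lambda>p. leibniz_weight n p T *
        (x k * g (p k) * (x m * h (p m) * minor_rest a p T m k))", symmetric])
    also have "\<dots> = (\<Sum>p\<in>perms n. - (leibniz_weight n p T *
        (x m * g (p m) * (x k * h (p k) * minor_rest a p T m k))))"
    proof (rule sum.cong[OF refl])
      fix p assume p: "p \<in> perms n"
      show "leibniz_weight n (p \<circ> transpose m k) T *
          (x k * g ((p \<circ> transpose m k) k) * (x m * h ((p \<circ> transpose m k) m) *
            minor_rest a (p \<circ> transpose m k) T m k)) =
          - (leibniz_weight n p T * (x m * g (p m) * (x k * h (p k) * minor_rest a p T m k)))"
        unfolding leibniz_weight_compose_swap[OF p T m k \<open>m \<noteq> k\<close>] minor_rest_compose_swap[OF m k]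
        by (simp add: mult_ac)
    qed
    also have "\<dots> = - ?G T m k"
      by (simp add: sum_negf)
    finally show ?thesis .
  qed
  note antisym = this
  have "(\<Sum>m\<in>T. \<Sum>k\<in>T-{m}. ?G T m k) = 0" if "T \<in> minor_sets n i" for T
    by (rule sum_offdiag_antisym[OF minor_sets_finite[OF that]]) (rule antisym[OF that])
  then show ?thesis
    unfolding Q_entries_deriv2_reorder by simp
qed

section \<open>The bracket \<open>{\<partial>Q\<^sub>i/\<partial>e\<^sub>l, v}\<close> in coordinates\<close>

lemma dualB_carrier: "is_sp_basis n B \<Longrightarrow> l < length B \<Longrightarrow> dualB n B l \<in> carrier_mat (2*n) (2*n)"
  using dualB_in_sp sp_carrier by blast

lemma pd_GS_Qf:
  assumes bas: "is_sp_basis n B" and l: "l < length B" and A: "A \<in> carrier_mat (2*n) (2*n)"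
  shows "pd n B (GS l) (Qf n i) A w = Q_entries_deriv n i (entries A) (entries (dualB n B l))"
proof -
  let ?D = "dualB n B l"
  have D: "?D \<in> carrier_mat (2*n) (2*n)"
    by (rule dualB_carrier[OF bas l])
  have "Qf n i (A + t \<cdot>\<^sub>m ?D) w = Q_entries n i (\<lambda>u v. entries A u v + t * entries ?D u v)" for t
  proof -
    have "A + t \<cdot>\<^sub>m ?D \<in> carrier_mat (2*n) (2*n)"
      using A D by auto
    then have "Qf n i (A + t \<cdot>\<^sub>m ?D) w = Q_entries n i (entries (A + t \<cdot>\<^sub>m ?D))"
      by (rule Qf_eq_Q_entries)
    also have "\<dots> = Q_entries n i (\<lambda>u v. entries A u v + t * entries ?D u v)"
      using A D by (intro Q_entries_cong) auto
    finally show ?thesis .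
  qed
  then show ?thesis
    by (simp add: deriv0_eqI[OF Q_entries_has_derivative])
qed

lemma pd_GS_pd_GS_Qf:
  assumes bas: "is_sp_basis n B" and l: "l < length B" and a: "a < length B"
    and A: "A \<in> carrier_mat (2*n) (2*n)"
  shows "pd n B (GS a) (pd n B (GS l) (Qf n i)) A w =
    Q_entries_deriv2 n i (entries A) (entries (dualB n B a)) (entries (dualB n B l))"
proof -
  let ?D = "dualB n B a"
  have D: "?D \<in> carrier_mat (2*n) (2*n)"
    by (rule dualB_carrier[OF bas a])
  have "pd n B (GS l) (Qf n i) (A + s \<cdot>\<^sub>m ?D) w =
      Q_entries_deriv n i (\<lambda>u v. entries A u v + s * entries ?D u v) (entries (dualB n B l))" for s
  proof -
    have "A + s \<cdot>\<^sub>m ?D \<in> carrier_mat (2*n) (2*n)"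
      using A D by auto
    then have "pd n B (GS l) (Qf n i) (A + s \<cdot>\<^sub>m ?D) w =
        Q_entries_deriv n i (entries (A + s \<cdot>\<^sub>m ?D)) (entries (dualB n B l))"
      by (rule pd_GS_Qf[OF bas l])
    also have "\<dots> = Q_entries_deriv n i (\<lambda>u v. entries A u v + s * entries ?D u v) (entries (dualB n B l))"
      using A D by (intro Q_entries_deriv_cong) auto
    finally show ?thesis .
  qed
  then show ?thesis
    by (simp add: deriv0_eqI[OF Q_entries_deriv_has_derivative])
qed

lemma pd_GV_pd_GS_Qf: "pd n B (GV k) (pd n B (GS l) (Qf n i)) A w = 0"
  by (simp add: Qf_def deriv0_const)

lemma pd_GS_genV: "pd n B (GS a) (genV n v) A w = 0"
  by (simp add: genV_def deriv0_const)

lemma pd_GV_genV: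
  assumes k: "k < 2*n" and v: "v \<in> carrier_vec (2*n)" and w: "w \<in> carrier_vec (2*n)"
  shows "pd n B (GV k) (genV n v) A w = v $ k"
proof -
  have "((\<lambda>t. omega n v w + t * omega n v (vstar n k)) has_field_derivative omega n v (vstar n k)) (at 0)"
    by (auto intro!: derivative_eq_intros)
  then show ?thesis
    using omega_add_smult_right[OF v w vstar_carrier[OF k]] omega_vstar_right[OF k v]
    by (simp add: genV_def deriv0_eqI)
qed

lemma sum_gens: "(\<Sum>a\<in>gens n B. f a) = (\<Sum>l<length B. f (GS l)) + (\<Sum>k<2*n. f (GV k))"
proof -
  have "(\<Sum>a\<in>gens n B. f a) = (\<Sum>a\<in>GS ` {..<length B}. f a) + (\<Sum>a\<in>GV ` {..<2*n}. f a)"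
    unfolding gens_def by (rule sum.union_disjoint) auto
  then show ?thesis
    by (simp add: sum.reindex inj_on_def)
qed

text \<open>\<open>omega_mat n M a b\<close> is \<open>\<omega>(M a, b)\<close> for vectors given by their coordinate functions.\<close>

definition omega_mat :: "nat \<Rightarrow> complex mat \<Rightarrow> (nat \<Rightarrow> complex) \<Rightarrow> (nat \<Rightarrow> complex) \<Rightarrow> complex" where
  "omega_mat n M a b = (\<Sum>x<2*n. \<Sum>y<2*n. M $$ (x, y) * a y * jsign x * b (partner x))"

lemma sum_omega_mult_unit_vec:
  assumes M: "M \<in> carrier_mat (2*n) (2*n)" and w: "w \<in> carrier_vec (2*n)"
  shows "(\<Sum>k<2*n. v $ k * omega n (M *\<^sub>v unit_vec (2*n) k) w) = omega_mat n M (($) v) (($) w)"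
proof -
  have "v $ k * omega n (M *\<^sub>v unit_vec (2*n) k) w =
      (\<Sum>x<2*n. M $$ (x, k) * v $ k * jsign x * w $ partner x)" if "k < 2*n" for k
    using M w that by (simp add: omega_expand scalar_prod_def unit_vec_def sum_distrib_left mult_ac)
  then have "(\<Sum>k<2*n. v $ k * omega n (M *\<^sub>v unit_vec (2*n) k) w) =
      (\<Sum>k<2*n. \<Sum>x<2*n. M $$ (x, k) * v $ k * jsign x * w $ partner x)"
    by simp
  also have "\<dots> = omega_mat n M (($) v) (($) w)"
    unfolding omega_mat_def by (rule sum.swap)
  finally show ?thesis .
qed

lemma sum_omega_mult_unit_vec_vstar:
  assumes M: "M \<in> carrier_mat (2*n) (2*n)" and w: "w \<in> carrier_vec (2*n)"
  shows "(\<Sum>j<2*n. omega n (M *\<^sub>v unit_vec (2*n) j) w * omega n (vstar n j) w) =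
    - omega_mat n M (($) w) (($) w)"
proof -
  have "(\<Sum>j<2*n. omega n (M *\<^sub>v unit_vec (2*n) j) w * omega n (vstar n j) w) =
      - (\<Sum>j<2*n. w $ j * omega n (M *\<^sub>v unit_vec (2*n) j) w)"
    using w by (simp add: omega_vstar_left sum_negf[symmetric] mult.commute)
  then show ?thesis
    using sum_omega_mult_unit_vec[OF M w, of w] by simp
qed

lemma omega_mat_sym:
  assumes M: "M \<in> sp n"
  shows "omega_mat n M a b = omega_mat n M b a"
proof -
  have "omega_mat n M b a =
      (\<Sum>x<2*n. \<Sum>y<2*n. M $$ (partner x, y) * b y * jsign (partner x) * a x)"
    unfolding omega_mat_def by (subst sum_reindex_partner) simp
  also have "\<dots> = (\<Sum>x<2*n. \<Sum>y<2*n. - (jsign y * M $$ (partner y, x)) * b y * a x)"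
  proof (intro sum.cong refl)
    fix x y
    assume "x \<in> {..<2*n}" "y \<in> {..<2*n}"
    then have "jsign x * M $$ (partner x, y) = jsign y * M $$ (partner y, x)"
      using sp_entries[OF M] by auto
    then show "M $$ (partner x, y) * b y * jsign (partner x) * a x =
        - (jsign y * M $$ (partner y, x)) * b y * a x"
      by (simp add: mult_ac)
  qed
  also have "\<dots> = (\<Sum>x<2*n. \<Sum>y<2*n. - (jsign (partner y) * M $$ (y, x)) * b (partner y) * a x)"
    by (rule sum.cong[OF refl], subst sum_reindex_partner, simp)
  also have "\<dots> = (\<Sum>x<2*n. \<Sum>y<2*n. M $$ (y, x) * a x * jsign y * b (partner y))"
    by (intro sum.cong refl) (simp add: mult_ac)
  also have "\<dots> = omega_mat n M a b"
    unfolding omega_mat_def by (rule sum.swap)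
  finally show ?thesis
    by simp
qed

text \<open>\<open>sym_product a b = a \<otimes> \<omega>(b, \<cdot>) + b \<otimes> \<omega>(a, \<cdot>)\<close> in coordinates.\<close>

definition sym_product :: "(nat \<Rightarrow> complex) \<Rightarrow> (nat \<Rightarrow> complex) \<Rightarrow> nat \<Rightarrow> nat \<Rightarrow> complex" where
  "sym_product a b x y = a x * (- jsign y * b (partner y)) + b x * (- jsign y * a (partner y))"

definition sym_product_mat :: "nat \<Rightarrow> complex \<Rightarrow> (nat \<Rightarrow> complex) \<Rightarrow> (nat \<Rightarrow> complex) \<Rightarrow> complex mat" where
  "sym_product_mat n c a b = mat (2*n) (2*n) (\<lambda>(x, y). c * sym_product a b x y)"

lemma sym_product_mat_in_sp: "sym_product_mat n c a b \<in> sp n"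
proof -
  have "jsign s * (c * sym_product a b (partner s) r) = jsign r * (c * sym_product a b (partner r) s)" for r s
    unfolding sym_product_def by (simp add: algebra_simps)
  then show ?thesis
    unfolding sym_product_mat_def by (subst sp_iff_entries) (auto simp: partner_less)
qed

lemma trace_form_sym_product_mat:
  assumes M: "M \<in> sp n"
  shows "trace_form n M (sym_product_mat n c a b) = - 2 * c * omega_mat n M a b"
proof -
  have "trace_form n M (sym_product_mat n c a b) =
      (\<Sum>x<2*n. \<Sum>y<2*n. (- c) * (M $$ (x, y) * a y * jsign x * b (partner x)) +
        (- c) * (M $$ (x, y) * b y * jsign x * a (partner x)))"
    unfolding trace_form_def sym_product_mat_def sym_product_def
    by (intro sum.cong refl) (simp add: algebra_simps)
  also have "\<dots> = - c * (omega_mat n M a b + omega_mat n M b a)"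
    unfolding omega_mat_def by (simp only: sum.distrib sum_distrib_left[symmetric] distrib_left)
  finally show ?thesis
    using omega_mat_sym[OF M, of a b] by simp
qed

lemma pbr_pd_Qf_genV:
  assumes bas: "is_sp_basis n B" and l: "l < length B" and A: "A \<in> carrier_mat (2*n) (2*n)"
    and v: "v \<in> carrier_vec (2*n)" and w: "w \<in> carrier_vec (2*n)"
  shows "pbr n B \<zeta> K (pd n B (GS l) (Qf n i)) (genV n v) A w =
    (\<Sum>a<length B. trace_form n (B ! a) (sym_product_mat n (-1/2) (($) v) (($) w)) *
      Q_entries_deriv2 n i (entries A) (entries (dualB n B a)) (entries (dualB n B l)))"
proof -
  let ?F = "pd n B (GS l) (Qf n i)"
  have "pbr n B \<zeta> K ?F (genV n v) A w = (\<Sum>a<length B. \<Sum>k<2*n.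
      pd n B (GS a) ?F A w * pd n B (GV k) (genV n v) A w * brgen n B \<zeta> K (GS a) (GV k) A w)"
    unfolding pbr_def sum_gens by (simp del: pd.simps add: pd_GV_pd_GS_Qf pd_GS_genV)
  also have "\<dots> = (\<Sum>a<length B.
      Q_entries_deriv2 n i (entries A) (entries (dualB n B a)) (entries (dualB n B l)) *
      (\<Sum>k<2*n. v $ k * omega n (B ! a *\<^sub>v unit_vec (2*n) k) w))"
    using pd_GS_pd_GS_Qf[OF bas l _ A] pd_GV_genV[OF _ v w]
    by (simp del: pd.simps add: genV_def sum_distrib_left mult.assoc)
  also have "\<dots> = (\<Sum>a<length B. trace_form n (B ! a) (sym_product_mat n (-1/2) (($) v) (($) w)) *
      Q_entries_deriv2 n i (entries A) (entries (dualB n B a)) (entries (dualB n B l)))"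
    using sp_basis_in_sp[OF bas] sp_carrier[OF sp_basis_in_sp[OF bas]] w
    by (intro sum.cong refl) (simp add: sum_omega_mult_unit_vec trace_form_sym_product_mat)
  finally show ?thesis .
qed

lemma sum_genV_mult_unit_vec_vstar:
  assumes M: "M \<in> sp n" and w: "w \<in> carrier_vec (2*n)"
  shows "(\<Sum>j<2*n. genV n (M *\<^sub>v unit_vec (2*n) j) A w * genV n (vstar n j) A w) =
    trace_form n M (sym_product_mat n (1/2) (($) w) (($) w))"
  using sum_omega_mult_unit_vec_vstar[OF sp_carrier[OF M] w]
  by (simp add: genV_def trace_form_sym_product_mat[OF M])

section \<open>Collapsing the sums to a single second derivative\<close>

lemma Q_entries_deriv2_dual_expansion:
  assumes bas: "is_sp_basis n B" and X: "X \<in> sp n" and Y: "Y \<in> sp n"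
  shows "(\<Sum>l<length B. \<Sum>a<length B. trace_form n (B ! a) X * trace_form n (B ! l) Y *
      Q_entries_deriv2 n i c (entries (dualB n B a)) (entries (dualB n B l))) =
    Q_entries_deriv2 n i c (entries X) (entries Y)"
proof -
  let ?x = "\<lambda>u v. \<Sum>a\<in>{..<length B}. trace_form n (B ! a) X * entries (dualB n B a) u v"
  let ?y = "\<lambda>u v. \<Sum>l\<in>{..<length B}. trace_form n (B ! l) Y * entries (dualB n B l) u v"
  have "(\<Sum>l<length B. \<Sum>a<length B. trace_form n (B ! a) X * trace_form n (B ! l) Y *
      Q_entries_deriv2 n i c (entries (dualB n B a)) (entries (dualB n B l))) =
      Q_entries_deriv2 n i c ?x ?y"
    by (subst sum.swap)
      (simp add: Q_entries_deriv2_sum_left Q_entries_deriv2_sum_right sum_distrib_left mult_ac)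
  also have "\<dots> = Q_entries_deriv2 n i c (entries X) (entries Y)"
    using sp_dual_expansion[OF bas X] sp_dual_expansion[OF bas Y]
    by (intro Q_entries_deriv2_cong) auto
  finally show ?thesis .
qed

lemma Q_entries_deriv2_sym_product_mats:
  "Q_entries_deriv2 n i c (entries (sym_product_mat n s v w)) (entries (sym_product_mat n t w w)) = 0"
proof -
  let ?g = "\<lambda>c. - jsign c * w (partner c)"
  let ?h = "\<lambda>c. - jsign c * v (partner c)"
  have "Q_entries_deriv2 n i c (entries (sym_product_mat n s v w)) (entries (sym_product_mat n t w w)) =
      Q_entries_deriv2 n i c (\<lambda>u z. s * (v u * ?g z + w u * ?h z)) (\<lambda>u z. t * (w u * ?g z + w u * ?g z))"
    by (rule Q_entries_deriv2_cong) (auto simp: sym_product_mat_def sym_product_def)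
  also have "\<dots> = 0"
    by (simp only: Q_entries_deriv2_scale_left Q_entries_deriv2_scale_right distrib_left
        Q_entries_deriv2_add_left Q_entries_deriv2_add_right
        Q_entries_deriv2_same_covector Q_entries_deriv2_same_vector) simp
  finally show ?thesis .
qed

theorem lemma7p4:
  fixes n i K :: nat and \<zeta> :: "nat \<Rightarrow> complex" and B :: "complex mat list"
    and v :: "complex vec"
  assumes "1 \<le> i" and "i \<le> n"
    and "is_sp_basis n B"
    and "v \<in> carrier_vec (2*n)"
  shows "H_zero n (\<lambda>A w. \<Sum>j<2*n. \<Sum>l<length B.
            pbr n B \<zeta> K (pd n B (GS l) (Qf n i)) (genV n v) A w
            * genV n (B ! l *\<^sub>v unit_vec (2*n) j) A w
            * genV n (vstar n j) A w)"
  unfolding H_zero_def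
proof (intro ballI)
  fix A :: "complex mat" and w :: "complex vec"
  assume A: "A \<in> sp n" and w: "w \<in> carrier_vec (2*n)"
  note bas = \<open>is_sp_basis n B\<close>
  let ?L = "length B"
  let ?Q2 = "\<lambda>X Y. Q_entries_deriv2 n i (entries A) (entries X) (entries Y)"
  let ?bracket = "\<lambda>l. pbr n B \<zeta> K (pd n B (GS l) (Qf n i)) (genV n v) A w"
  let ?contract = "\<lambda>l. \<Sum>j<2*n. genV n (B ! l *\<^sub>v unit_vec (2*n) j) A w * genV n (vstar n j) A w"
  define X where "X = sym_product_mat n (-1/2) (($) v) (($) w)"
  define Y where "Y = sym_product_mat n (1/2) (($) w) (($) w)"
  have "(\<Sum>j<2*n. \<Sum>l<?L.
      ?bracket l * genV n (B ! l *\<^sub>v unit_vec (2*n) j) A w * genV n (vstar n j) A w) =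
      (\<Sum>l<?L. ?bracket l * ?contract l)"
    by (subst sum.swap) (simp add: sum_distrib_left mult.assoc)
  also have "\<dots> = (\<Sum>l<?L. \<Sum>a<?L. trace_form n (B ! a) X * trace_form n (B ! l) Y *
      ?Q2 (dualB n B a) (dualB n B l))"
  proof (rule sum.cong[OF refl])
    fix l
    assume "l \<in> {..<?L}"
    then have l: "l < ?L"
      by simp
    show "?bracket l * ?contract l = (\<Sum>a<?L. trace_form n (B ! a) X * trace_form n (B ! l) Y *
        ?Q2 (dualB n B a) (dualB n B l))"
      unfolding pbr_pd_Qf_genV[OF bas l sp_carrier[OF A] \<open>v \<in> carrier_vec (2*n)\<close> w]
        sum_genV_mult_unit_vec_vstar[OF sp_basis_in_sp[OF bas l] w] X_def Y_def
      by (simp add: sum_distrib_left mult_ac)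
  qed
  also have "\<dots> = ?Q2 X Y"
    unfolding X_def Y_def
    by (rule Q_entries_deriv2_dual_expansion[OF bas sym_product_mat_in_sp sym_product_mat_in_sp])
  also have "\<dots> = 0"
    unfolding X_def Y_def by (rule Q_entries_deriv2_sym_product_mats)
  finally show "(\<Sum>j<2*n. \<Sum>l<?L. ?bracket l * genV n (B ! l *\<^sub>v unit_vec (2*n) j) A w *
      genV n (vstar n j) A w) = 0" .
qed

end
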